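(* Let $0<\omega_1<\omega_2<\cdots$, let $(c_j)$ be a real square-summable sequence with $c_j\ne0$ for all $j$, $\gamma>0$, and $f(\lambda)=\sum_{j}\frac{c_j^2}{\omega_j}\big(\frac1{\lambda-i\omega_j}-\frac1{\lambda+i\omega_j}\big)+\frac{2i}{\gamma\lambda}$. For $k\ge2$ let $F_k(\lambda)=(\lambda-i\omega_k)f(\lambda)$, $\lambda_k^*=i\omega_k-F_k(i\omega_k)/F_k'(i\omega_k)$, and $\rho_k$ be defined by $F_k(\lambda)=F_k(i\omega_k)+(\lambda-i\omega_k)F_k'(i\omega_k)+(\lambda-i\omega_k)^2\rho_k(\lambda)$. Suppose there is $k_1$ such that for every $k\ge k_1$: $\omega_k>1$, $\omega_{k+1}-\omega_k>\omega_k-\omega_{k-1}$, and there are $0<R_1^{(k)}<\omega_k-\omega_{k-1}$ and $R_k>0$ with: $M_k:=\sup_{|\lambda-i\omega_k|\le R_1^{(k)}}|\rho_k(\lambda)|$ satisfies $0<M_k<\frac{\gamma\omega_k|F_k'(i\omega_k)|^3}{c_k^2(\gamma\omega_k|F_k'(i\omega_k)|+1)^2}$; $\sqrt{R_k}\in(b_k-\sqrt{b_k^2-d_k},\,b_k+\sqrt{b_k^2-d_k})$ where $b_k=\sqrt{|F_k'(i\omega_k)|/(4M_k)}$, $d_k=|F_k(i\omega_k)/F_k'(i\omega_k)|$; $R_k\le\frac12|\mathrm{Re}\,\lambda_k^*|$; and $\{|\lambda-\lambda_k^*|<R_k\}\subset\{|\lambda-i\omega_k|\le R_1^{(k)}\}$.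 Let $\lambda_k$ be the unique zero of $f$ in $\{|\lambda-\lambda_k^*|<R_k\}$ (an eigenvalue of the operator $A$ below, as is $\bar\lambda_k$). Then $$\lambda_k=i\omega_k+O(c_k^2),\qquad \bar\lambda_k=-i\omega_k+O(c_k^2)\qquad (k\to\infty).$$
   Context: $A$ is the operator on the complex space $H=\ell^2\times\ell^2$ given by $A(q,p)=(-i\Omega q+\check Aq+\check Ap,\ \check Aq+i\Omega p+\check Ap)$ with $\Omega=\mathrm{diag}(\omega_j)$, $(\check Ax)_j=-\frac\gamma2c_j\sum_\iota c_\iota x_\iota$, domain $\{(q,p):\sum_j\omega_j^2(|q_j|^2+|p_j|^2)<\infty\}$; its eigenvalues off $\{0,\pm i\omega_j\}$ are the zeros of $f$. *)

theory Defs
  imports "HOL-Analysis.Analysis" "HOL-Library.Landau_Symbols"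
begin

text \<open>Sequences are indexed from 1 (index 0 is unused): omega j, c j for j >= 1.\<close>

definition fser :: "(nat \<Rightarrow> real) \<Rightarrow> (nat \<Rightarrow> real) \<Rightarrow> real \<Rightarrow> complex \<Rightarrow> complex" where
  "fser \<omega> c \<gamma> z =
     (\<Sum>j. complex_of_real ((c (Suc j))\<^sup>2 / \<omega> (Suc j)) *
            (1 / (z - \<i> * complex_of_real (\<omega> (Suc j))) - 1 / (z + \<i> * complex_of_real (\<omega> (Suc j)))))
     + 2 * \<i> / (complex_of_real \<gamma> * z)"

text \<open>Poles of f: 0 and +-i omega_j (j >= 1). A zero of f is a point off the poles where f vanishes.\<close>
definition fpoles :: "(nat \<Rightarrow> real) \<Rightarrow> complex set" where
  "fpoles \<omega> = {0} \<union> {\<i> * complex_of_real (\<omega> j) | j. j \<ge> 1} \<union> {- \<i> * complex_of_real (\<omega> j) | j. j \<ge> 1}"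

definition Fk :: "(nat \<Rightarrow> real) \<Rightarrow> (nat \<Rightarrow> real) \<Rightarrow> real \<Rightarrow> nat \<Rightarrow> complex \<Rightarrow> complex" where
  "Fk \<omega> c \<gamma> k z =
     (let a = \<i> * complex_of_real (\<omega> k) in
      if z = a then Lim (at a) (\<lambda>w. (w - a) * fser \<omega> c \<gamma> w)
      else (z - a) * fser \<omega> c \<gamma> z)"

definition dFk :: "(nat \<Rightarrow> real) \<Rightarrow> (nat \<Rightarrow> real) \<Rightarrow> real \<Rightarrow> nat \<Rightarrow> complex" where
  "dFk \<omega> c \<gamma> k = deriv (Fk \<omega> c \<gamma> k) (\<i> * complex_of_real (\<omega> k))"

definition lamstar :: "(nat \<Rightarrow> real) \<Rightarrow> (nat \<Rightarrow> real) \<Rightarrow> real \<Rightarrow> nat \<Rightarrow> complex" where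
  "lamstar \<omega> c \<gamma> k = \<i> * complex_of_real (\<omega> k)
      - Fk \<omega> c \<gamma> k (\<i> * complex_of_real (\<omega> k)) / dFk \<omega> c \<gamma> k"

definition rhok :: "(nat \<Rightarrow> real) \<Rightarrow> (nat \<Rightarrow> real) \<Rightarrow> real \<Rightarrow> nat \<Rightarrow> complex \<Rightarrow> complex" where
  "rhok \<omega> c \<gamma> k z =
     (let a = \<i> * complex_of_real (\<omega> k);
          r = (\<lambda>w. (Fk \<omega> c \<gamma> k w - Fk \<omega> c \<gamma> k a - (w - a) * dFk \<omega> c \<gamma> k) / (w - a)\<^sup>2)
      in if z = a then Lim (at a) r else r z)"

definition Mk :: "(nat \<Rightarrow> real) \<Rightarrow> (nat \<Rightarrow> real) \<Rightarrow> real \<Rightarrow> nat \<Rightarrow> real \<Rightarrow> real" where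
  "Mk \<omega> c \<gamma> k R1 = (SUP z \<in> cball (\<i> * complex_of_real (\<omega> k)) R1. cmod (rhok \<omega> c \<gamma> k z))"

end

theory Submission
  imports Defs
begin

text \<open>Near \<open>i \<omega>\<^sub>k\<close> only the \<open>k\<close>-th term of the series for \<open>f\<close> is singular, so \<open>F\<^sub>k(i \<omega>\<^sub>k) = c\<^sub>k\<^sup>2 / \<omega>\<^sub>k\<close>
  is its residue and \<open>F\<^sub>k'(i \<omega>\<^sub>k)\<close> is the value at \<open>i \<omega>\<^sub>k\<close> of the regular part of \<open>f\<close>. All other
  terms of the series are purely imaginary on the imaginary axis, so \<open>Re F\<^sub>k'(i \<omega>\<^sub>k) = 2 / (\<gamma> \<omega>\<^sub>k)\<close>
  comes from \<open>2 i / (\<gamma> \<lambda>)\<close> alone. Hence the Newton step satisfies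
  \<open>|\<lambda>\<^sub>k\<^sup>* - i \<omega>\<^sub>k| = |F\<^sub>k(i \<omega>\<^sub>k) / F\<^sub>k'(i \<omega>\<^sub>k)| \<le> \<gamma> c\<^sub>k\<^sup>2 / 2\<close>, and as \<open>\<lambda>\<^sub>k\<close> lies within
  \<open>R\<^sub>k \<le> |Re \<lambda>\<^sub>k\<^sup>*| / 2 \<le> |\<lambda>\<^sub>k\<^sup>* - i \<omega>\<^sub>k| / 2\<close> of \<open>\<lambda>\<^sub>k\<^sup>*\<close>, we get \<open>|\<lambda>\<^sub>k - i \<omega>\<^sub>k| \<le> 3 \<gamma> c\<^sub>k\<^sup>2 / 4\<close>.
  Only the hypotheses \<open>om_pos\<close>, \<open>om_inc\<close>, \<open>c_sq\<close>, \<open>gam\<close>, \<open>k1\<close>, \<open>R_re\<close> and \<open>lam_zero\<close>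
  are used: the others serve to locate the zero \<open>\<lambda>\<^sub>k\<close>, which the statement supplies.\<close>

lemma continuous_on_suminf_M_test:
  fixes u :: "nat \<Rightarrow> 'a::topological_space \<Rightarrow> 'b::banach"
  assumes cont: "\<And>n. continuous_on A (u n)"
    and bound: "\<And>n x. x \<in> A \<Longrightarrow> norm (u n x) \<le> B n"
    and "summable B"
  shows "continuous_on A (\<lambda>x. \<Sum>n. u n x)"
proof (rule uniform_limit_theorem)
  show "uniform_limit A (\<lambda>n x. \<Sum>i<n. u i x) (\<lambda>x. \<Sum>n. u n x) sequentially"
    using bound \<open>summable B\<close> by (rule Weierstrass_m_test)
qed (auto intro!: always_eventually continuous_on_sum cont)

lemma simple_pole_regular_part:
  fixes f G :: "complex \<Rightarrow> complex"
  assumes G: "isCont G a" and f: "\<forall>\<^sub>F z in at a. f z = C / (z - a) + G z"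
  defines "F \<equiv> \<lambda>z. if z = a then Lim (at a) (\<lambda>w. (w - a) * f w) else (z - a) * f z"
  shows "F a = C" and "(F has_field_derivative G a) (at a)"
proof -
  define H where "H z = C + (z - a) * G z" for z
  have fH: "\<forall>\<^sub>F z in at a. (z - a) * f z = H z"
    using f eventually_neq_at_within[of a a UNIV]
    by eventually_elim (simp add: H_def field_simps)
  have "isCont H a"
    unfolding H_def using G by (intro continuous_intros)
  then have "((\<lambda>w. (w - a) * f w) \<longlongrightarrow> C) (at a)"
    using fH by (simp add: isCont_def H_def tendsto_cong[symmetric])
  then show Fa: "F a = C"
    unfolding F_def by (simp add: tendsto_Lim)
  have "((\<lambda>z. (H z - H a) / (z - a)) \<longlongrightarrow> G a) (at a)"
  proof (rule tendsto_cong[THEN iffD1])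
    show "\<forall>\<^sub>F z in at a. G z = (H z - H a) / (z - a)"
      using eventually_neq_at_within[of a a UNIV] by eventually_elim (simp add: H_def)
  qed (use G in \<open>simp add: isCont_def\<close>)
  then have "(H has_field_derivative G a) (at a)"
    by (simp add: has_field_derivative_iff)
  moreover have "\<forall>\<^sub>F z in at a. F z = H z"
    using fH eventually_neq_at_within[of a a UNIV] by eventually_elim (simp add: F_def)
  ultimately show "(F has_field_derivative G a) (at a)"
    using Fa by (subst has_field_derivative_cong_eventually) (simp_all add: H_def)
qed

definition fterm :: "(nat \<Rightarrow> real) \<Rightarrow> (nat \<Rightarrow> real) \<Rightarrow> nat \<Rightarrow> complex \<Rightarrow> complex" where
  "fterm \<omega> c j z = complex_of_real ((c j)\<^sup>2 / \<omega> j) *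
     (1 / (z - \<i> * complex_of_real (\<omega> j)) - 1 / (z + \<i> * complex_of_real (\<omega> j)))"

lemma fser_eq_suminf_fterm:
  "fser \<omega> c \<gamma> z = (\<Sum>j. fterm \<omega> c (Suc j) z) + 2 * \<i> / (complex_of_real \<gamma> * z)"
  by (simp add: fser_def fterm_def)

lemma Re_fterm_imaginary_axis: "Re (fterm \<omega> c j (\<i> * complex_of_real x)) = 0"
  by (simp add: fterm_def Re_divide)

lemma norm_fterm_le:
  assumes "0 < d" "d \<le> cmod (z - \<i> * complex_of_real (\<omega> j))"
    and "0 < e" "e \<le> cmod (z + \<i> * complex_of_real (\<omega> j))"
    and "0 < w" "w \<le> \<omega> j"
  shows "cmod (fterm \<omega> c j z) \<le> (c j)\<^sup>2 / w * (1 / d + 1 / e)"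
proof -
  have "cmod (1 / (z - \<i> * complex_of_real (\<omega> j)) - 1 / (z + \<i> * complex_of_real (\<omega> j)))
      \<le> 1 / d + 1 / e"
    using assms(1-4)
    by (intro order_trans[OF norm_triangle_ineq4] add_mono) (simp_all add: norm_divide frac_le)
  moreover have "\<bar>(c j)\<^sup>2 / \<omega> j\<bar> \<le> (c j)\<^sup>2 / w"
    using assms(5,6) by (simp add: frac_le)
  ultimately show ?thesis
    unfolding fterm_def norm_mult norm_of_real using assms(1,3,5)
    by (intro mult_mono) auto
qed

lemma norm_add_imaginary_ge:
  assumes "Im z \<ge> 0" "w \<ge> 0"
  shows "w \<le> cmod (z + \<i> * complex_of_real w)"
  using abs_Im_le_cmod[of "z + \<i> * complex_of_real w"] assms by simp

locale oscillator_chain =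
  fixes \<omega> c :: "nat \<Rightarrow> real" and \<gamma> :: real
  assumes omega_1_pos: "\<omega> 1 > 0"
    and omega_increasing: "\<And>j. j \<ge> 1 \<Longrightarrow> \<omega> j < \<omega> (Suc j)"
    and summable_c_sq: "summable (\<lambda>j. (c j)\<^sup>2)"
    and gamma_pos: "\<gamma> > 0"
begin

lemma omega_mono:
  assumes "1 \<le> i" "i \<le> j"
  shows "\<omega> i \<le> \<omega> j"
  using assms(2)
proof (induction j rule: dec_induct)
  case (step n)
  then show ?case using omega_increasing[of n] assms(1) by simp
qed simp

lemma omega_pos: "j \<ge> 1 \<Longrightarrow> \<omega> j > 0"
  using omega_1_pos omega_mono[of 1 j] by simp

definition pole_gap :: "nat \<Rightarrow> real" where
  "pole_gap k = min (\<omega> k - \<omega> (k - 1)) (\<omega> (Suc k) - \<omega> k)"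

lemma pole_gap_pos: "k \<ge> 2 \<Longrightarrow> pole_gap k > 0"
  using omega_increasing[of "k - 1"] omega_increasing[of k] by (simp add: pole_gap_def)

lemma pole_gap_le:
  assumes "k \<ge> 2" "j \<ge> 1" "j \<noteq> k"
  shows "pole_gap k \<le> \<bar>\<omega> k - \<omega> j\<bar>"
proof (cases "j < k")
  case True
  then have "\<omega> j \<le> \<omega> (k - 1)" using omega_mono assms(2) by simp
  then show ?thesis unfolding pole_gap_def by linarith
next
  case False
  then have "\<omega> (Suc k) \<le> \<omega> j" using omega_mono assms(1,3) by simp
  then show ?thesis unfolding pole_gap_def by linarith
qed

lemma dist_other_poles:
  assumes "k \<ge> 2" "j \<ge> 1" "j \<noteq> k"
    and z: "cmod (z - \<i> * complex_of_real (\<omega> k)) < min (pole_gap k / 2) (\<omega> k / 2)"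
  shows "pole_gap k / 2 \<le> cmod (z - \<i> * complex_of_real (\<omega> j))"
    and "\<omega> j \<le> cmod (z + \<i> * complex_of_real (\<omega> j))"
proof -
  define a where "a = \<i> * complex_of_real (\<omega> k)"
  have "pole_gap k \<le> \<bar>\<omega> k - \<omega> j\<bar>"
    using pole_gap_le assms(1-3) .
  also have "\<bar>\<omega> k - \<omega> j\<bar> = cmod (a - \<i> * complex_of_real (\<omega> j))"
    unfolding a_def by (simp add: norm_mult flip: right_diff_distrib of_real_diff)
  also have "\<dots> \<le> cmod (z - \<i> * complex_of_real (\<omega> j)) + cmod (z - a)"
    using norm_triangle_ineq4[of "z - \<i> * complex_of_real (\<omega> j)" "z - a"] by simp
  finally show "pole_gap k / 2 \<le> cmod (z - \<i> * complex_of_real (\<omega> j))"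
    using z unfolding a_def by linarith
  have "\<bar>Im (z - a)\<bar> < \<omega> k / 2"
    using abs_Im_le_cmod[of "z - a"] z unfolding a_def by linarith
  then have "Im z \<ge> 0"
    by (auto simp: a_def abs_if split: if_splits)
  then show "\<omega> j \<le> cmod (z + \<i> * complex_of_real (\<omega> j))"
    using norm_add_imaginary_ge omega_pos assms(2) by (simp add: less_imp_le)
qed

lemma fterm_M_test_near_pole:
  assumes "k \<ge> 2"
  obtains r B where "r > 0" "summable B" "\<And>j. B j \<ge> 0"
    and "\<And>j. j \<ge> 1 \<Longrightarrow> j \<noteq> k \<Longrightarrow> continuous_on (ball (\<i> * complex_of_real (\<omega> k)) r) (fterm \<omega> c j)"
    and "\<And>j z. z \<in> ball (\<i> * complex_of_real (\<omega> k)) r \<Longrightarrow> j \<ge> 1 \<Longrightarrow> j \<noteq> k \<Longrightarrow>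
           cmod (fterm \<omega> c j z) \<le> B j"
proof
  define r where "r = min (pole_gap k / 2) (\<omega> k / 2)"
  define B where "B j = (c j)\<^sup>2 / \<omega> 1 * (1 / (pole_gap k / 2) + 1 / \<omega> 1)" for j
  have in_ball: "cmod (z - \<i> * complex_of_real (\<omega> k)) < r" if "z \<in> ball (\<i> * complex_of_real (\<omega> k)) r" for z
    using that by (simp add: dist_norm norm_minus_commute)
  note gap_pos = pole_gap_pos[OF assms]
  show "r > 0"
    using gap_pos omega_pos[of k] assms by (simp add: r_def)
  show "summable B"
    unfolding B_def using summable_c_sq by (intro summable_mult2 summable_divide)
  show "B j \<ge> 0" for j
    unfolding B_def using gap_pos omega_1_pos by simp
  show "continuous_on (ball (\<i> * complex_of_real (\<omega> k)) r) (fterm \<omega> c j)" if j: "j \<ge> 1" "j \<noteq> k" for j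
    unfolding fterm_def
  proof (intro continuous_intros ballI)
    fix z assume "z \<in> ball (\<i> * complex_of_real (\<omega> k)) r"
    note far = dist_other_poles[OF assms j in_ball[OF this, unfolded r_def]]
    show "z - \<i> * complex_of_real (\<omega> j) \<noteq> 0" "z + \<i> * complex_of_real (\<omega> j) \<noteq> 0"
      using far gap_pos omega_pos[OF j(1)] by auto
  qed
  show "cmod (fterm \<omega> c j z) \<le> B j"
    if z: "z \<in> ball (\<i> * complex_of_real (\<omega> k)) r" and j: "j \<ge> 1" "j \<noteq> k" for j z
    unfolding B_def
  proof (rule norm_fterm_le)
    note far = dist_other_poles[OF assms j in_ball[OF z, unfolded r_def]]
    show "pole_gap k / 2 \<le> cmod (z - \<i> * complex_of_real (\<omega> j))"
      using far(1) .
    show "\<omega> 1 \<le> cmod (z + \<i> * complex_of_real (\<omega> j))"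
      using far(2) omega_mono[of 1 j] j by simp
  qed (use gap_pos omega_1_pos omega_mono[of 1 j] j in auto)
qed

lemma suminf_fterm_split_pole:
  assumes "k \<ge> 2"
  obtains r S where "r > 0" "isCont S (\<i> * complex_of_real (\<omega> k))" "Re (S (\<i> * complex_of_real (\<omega> k))) = 0"
    and "\<And>z. z \<in> ball (\<i> * complex_of_real (\<omega> k)) r \<Longrightarrow>
           (\<lambda>j. fterm \<omega> c (Suc j) z) sums (S z + fterm \<omega> c k z)"
proof -
  define a where "a = \<i> * complex_of_real (\<omega> k)"
  obtain r B where r: "r > 0" and B: "summable B" "\<And>j. B j \<ge> 0"
    and cont: "\<And>j. j \<ge> 1 \<Longrightarrow> j \<noteq> k \<Longrightarrow> continuous_on (ball a r) (fterm \<omega> c j)"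
    and bound: "\<And>j z. z \<in> ball a r \<Longrightarrow> j \<ge> 1 \<Longrightarrow> j \<noteq> k \<Longrightarrow> cmod (fterm \<omega> c j z) \<le> B j"
    using fterm_M_test_near_pole[OF assms] unfolding a_def by metis
  define u where "u j z = (if Suc j = k then 0 else fterm \<omega> c (Suc j) z)" for j z
  define S where "S z = (\<Sum>j. u j z)" for z
  have u_bound: "cmod (u j z) \<le> B (Suc j)" if "z \<in> ball a r" for j z
    using bound[OF that] B(2) by (simp add: u_def)
  have B_Suc: "summable (\<lambda>j. B (Suc j))"
    using B(1) by (simp add: summable_Suc_iff)
  have "continuous_on (ball a r) (u j)" for j
    by (cases "Suc j = k") (simp_all add: u_def cont)
  then have "continuous_on (ball a r) S"
    unfolding S_def using B_Suc u_bound by (intro continuous_on_suminf_M_test)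
  then have "isCont S a"
    using r by (simp add: continuous_on_eq_continuous_at)
  have u_sums: "(\<lambda>j. u j z) sums S z" if "z \<in> ball a r" for z
    unfolding S_def using u_bound[OF that] B_Suc
    by (intro summable_sums summable_comparison_test[of "\<lambda>j. u j z" "\<lambda>j. B (Suc j)"]) auto
  have "(\<lambda>j. Re (u j a)) sums Re (S a)"
    using sums_Re[OF u_sums[of a]] r by simp
  moreover have "Re (u j a) = 0" for j
    by (simp add: u_def a_def Re_fterm_imaginary_axis)
  ultimately have "Re (S a) = 0"
    by (simp add: sums_iff)
  moreover have "(\<lambda>j. fterm \<omega> c (Suc j) z) sums (S z + fterm \<omega> c k z)" if "z \<in> ball a r" for z
  proof -
    have "(\<lambda>j. u j z + (if j = k - 1 then fterm \<omega> c (Suc j) z else 0)) sums (S z + fterm \<omega> c k z)"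
      using sums_add[OF u_sums[OF that] sums_single[of "k - 1" "\<lambda>j. fterm \<omega> c (Suc j) z"]] assms
      by (simp add: Suc_diff_le)
    moreover have "u j z + (if j = k - 1 then fterm \<omega> c (Suc j) z else 0) = fterm \<omega> c (Suc j) z" for j
      using assms by (auto simp: u_def)
    ultimately show ?thesis
      by simp
  qed
  ultimately show thesis
    using that r \<open>isCont S a\<close> unfolding a_def by blast
qed

lemma fser_simple_pole:
  assumes "k \<ge> 2"
  obtains G where "isCont G (\<i> * complex_of_real (\<omega> k))"
    and "Re (G (\<i> * complex_of_real (\<omega> k))) = 2 / (\<gamma> * \<omega> k)"
    and "\<forall>\<^sub>F z in at (\<i> * complex_of_real (\<omega> k)).
           fser \<omega> c \<gamma> z = complex_of_real ((c k)\<^sup>2 / \<omega> k) / (z - \<i> * complex_of_real (\<omega> k)) + G z"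
proof -
  define a where "a = \<i> * complex_of_real (\<omega> k)"
  define C where "C = complex_of_real ((c k)\<^sup>2 / \<omega> k)"
  obtain r S where r: "r > 0" and S: "isCont S a" "Re (S a) = 0"
    and fterm_sums: "\<And>z. z \<in> ball a r \<Longrightarrow> (\<lambda>j. fterm \<omega> c (Suc j) z) sums (S z + fterm \<omega> c k z)"
    using suminf_fterm_split_pole[OF assms] unfolding a_def by metis
  define G where "G z = S z - C / (z + a) + 2 * \<i> / (complex_of_real \<gamma> * z)" for z
  have fterm_k: "fterm \<omega> c k z = C / (z - a) - C / (z + a)" for z
    by (simp add: fterm_def C_def a_def right_diff_distrib)
  have fser_near: "fser \<omega> c \<gamma> z = C / (z - a) + G z" if "z \<in> ball a r" for z
    using sums_unique[OF fterm_sums[OF that], symmetric]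
    by (simp add: fser_eq_suminf_fterm G_def fterm_k)
  have "Re (G a) = 2 / (\<gamma> * \<omega> k)"
    using S(2) gamma_pos omega_pos[of k] assms
    by (simp add: G_def C_def a_def Re_divide power2_eq_square)
  moreover have "isCont G a"
    unfolding G_def using S(1) gamma_pos omega_pos[of k] assms
    by (intro continuous_intros) (auto simp: a_def)
  moreover have "\<forall>\<^sub>F z in at a. fser \<omega> c \<gamma> z = C / (z - a) + G z"
    using eventually_at_ball[OF r, of a UNIV] by eventually_elim (simp add: fser_near)
  ultimately show thesis
    using that unfolding a_def C_def by blast
qed

lemma Fk_at_pole_and_Re_dFk:
  assumes "k \<ge> 2"
  shows "Fk \<omega> c \<gamma> k (\<i> * complex_of_real (\<omega> k)) = complex_of_real ((c k)\<^sup>2 / \<omega> k)"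
    and "Re (dFk \<omega> c \<gamma> k) = 2 / (\<gamma> * \<omega> k)"
proof -
  define a where "a = \<i> * complex_of_real (\<omega> k)"
  obtain G where G: "isCont G a" "Re (G a) = 2 / (\<gamma> * \<omega> k)"
    and fser_G: "\<forall>\<^sub>F z in at a. fser \<omega> c \<gamma> z = complex_of_real ((c k)\<^sup>2 / \<omega> k) / (z - a) + G z"
    using fser_simple_pole[OF assms] unfolding a_def by blast
  have Fk_eq: "Fk \<omega> c \<gamma> k =
      (\<lambda>z. if z = a then Lim (at a) (\<lambda>w. (w - a) * fser \<omega> c \<gamma> w) else (z - a) * fser \<omega> c \<gamma> z)"
    by (simp add: fun_eq_iff Fk_def Let_def a_def)
  note pole = simple_pole_regular_part[OF G(1) fser_G]
  show "Fk \<omega> c \<gamma> k (\<i> * complex_of_real (\<omega> k)) = complex_of_real ((c k)\<^sup>2 / \<omega> k)"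
    using pole(1) by (simp add: Fk_eq flip: a_def)
  have "(Fk \<omega> c \<gamma> k has_field_derivative G a) (at a)"
    using pole(2) by (simp add: Fk_eq)
  then show "Re (dFk \<omega> c \<gamma> k) = 2 / (\<gamma> * \<omega> k)"
    using G(2) by (simp add: dFk_def DERIV_imp_deriv flip: a_def)
qed

lemma dist_lamstar_pole_le:
  assumes "k \<ge> 2"
  shows "cmod (lamstar \<omega> c \<gamma> k - \<i> * complex_of_real (\<omega> k)) \<le> \<gamma> / 2 * (c k)\<^sup>2"
proof -
  have \<omega>_k: "\<omega> k > 0"
    using omega_pos assms by simp
  have "2 / (\<gamma> * \<omega> k) \<le> cmod (dFk \<omega> c \<gamma> k)"
    using complex_Re_le_cmod Fk_at_pole_and_Re_dFk(2)[OF assms] by metis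
  then have "(c k)\<^sup>2 / \<omega> k / cmod (dFk \<omega> c \<gamma> k) \<le> (c k)\<^sup>2 / \<omega> k / (2 / (\<gamma> * \<omega> k))"
    using gamma_pos \<omega>_k by (intro frac_le) auto
  also have "\<dots> = \<gamma> / 2 * (c k)\<^sup>2"
    using \<omega>_k by (simp add: field_simps)
  finally show ?thesis
    using \<omega>_k by (simp add: lamstar_def Fk_at_pole_and_Re_dFk(1)[OF assms] norm_divide norm_mult norm_power)
qed

lemma dist_pole_le_near_lamstar:
  assumes "k \<ge> 2" and "l \<in> ball (lamstar \<omega> c \<gamma> k) \<rho>"
    and "\<rho> \<le> \<bar>Re (lamstar \<omega> c \<gamma> k)\<bar> / 2"
  shows "cmod (l - \<i> * complex_of_real (\<omega> k)) \<le> 3 * \<gamma> / 4 * (c k)\<^sup>2"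
proof -
  define a where "a = \<i> * complex_of_real (\<omega> k)"
  define s where "s = lamstar \<omega> c \<gamma> k"
  have "\<bar>Re s\<bar> \<le> cmod (s - a)"
    using abs_Re_le_cmod[of "s - a"] by (simp add: a_def)
  then have "cmod (l - s) < cmod (s - a) / 2"
    using assms(2,3) by (simp add: s_def dist_norm norm_minus_commute)
  moreover have "cmod (l - a) \<le> cmod (l - s) + cmod (s - a)"
    using norm_triangle_ineq[of "l - s" "s - a"] by simp
  moreover have "cmod (s - a) \<le> \<gamma> / 2 * (c k)\<^sup>2"
    using dist_lamstar_pole_le[OF assms(1)] by (simp add: s_def a_def)
  ultimately show ?thesis
    unfolding a_def by linarith
qed

end

theorem proposition3p3:
  fixes \<omega> c :: "nat \<Rightarrow> real" and \<gamma> :: real and k1 :: nat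
    and R1 R :: "nat \<Rightarrow> real" and lam :: "nat \<Rightarrow> complex"
  assumes om_pos: "\<omega> 1 > 0"
    and om_inc: "\<And>j. j \<ge> 1 \<Longrightarrow> \<omega> j < \<omega> (Suc j)"
    and c_sq: "summable (\<lambda>j. (c j)\<^sup>2)"
    and c_nz: "\<And>j. j \<ge> 1 \<Longrightarrow> c j \<noteq> 0"
    and gam: "\<gamma> > 0"
    and k1: "k1 \<ge> 2"
    and om_gt1: "\<And>k. k \<ge> k1 \<Longrightarrow> \<omega> k > 1"
    and gaps: "\<And>k. k \<ge> k1 \<Longrightarrow> \<omega> (Suc k) - \<omega> k > \<omega> k - \<omega> (k - 1)"
    and R1_pos: "\<And>k. k \<ge> k1 \<Longrightarrow> 0 < R1 k \<and> R1 k < \<omega> k - \<omega> (k - 1)"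
    and R_pos: "\<And>k. k \<ge> k1 \<Longrightarrow> R k > 0"
    and M_bounds: "\<And>k. k \<ge> k1 \<Longrightarrow>
        0 < Mk \<omega> c \<gamma> k (R1 k) \<and>
        Mk \<omega> c \<gamma> k (R1 k) < \<gamma> * \<omega> k * (cmod (dFk \<omega> c \<gamma> k)) ^ 3
            / ((c k)\<^sup>2 * (\<gamma> * \<omega> k * cmod (dFk \<omega> c \<gamma> k) + 1)\<^sup>2)"
    and R_interval: "\<And>k. k \<ge> k1 \<Longrightarrow>
        (let b = sqrt (cmod (dFk \<omega> c \<gamma> k) / (4 * Mk \<omega> c \<gamma> k (R1 k)));
             d = cmod (Fk \<omega> c \<gamma> k (\<i> * complex_of_real (\<omega> k)) / dFk \<omega> c \<gamma> k)
         in b - sqrt (b\<^sup>2 - d) < sqrt (R k) \<and> sqrt (R k) < b + sqrt (b\<^sup>2 - d))"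
    and R_re: "\<And>k. k \<ge> k1 \<Longrightarrow> R k \<le> \<bar>Re (lamstar \<omega> c \<gamma> k)\<bar> / 2"
    and R_ball: "\<And>k. k \<ge> k1 \<Longrightarrow>
        ball (lamstar \<omega> c \<gamma> k) (R k) \<subseteq> cball (\<i> * complex_of_real (\<omega> k)) (R1 k)"
    and lam_zero: "\<And>k. k \<ge> k1 \<Longrightarrow>
        lam k \<in> ball (lamstar \<omega> c \<gamma> k) (R k) \<and> lam k \<notin> fpoles \<omega> \<and> fser \<omega> c \<gamma> (lam k) = 0"
  shows "(\<lambda>k. lam k - \<i> * complex_of_real (\<omega> k)) \<in> O(\<lambda>k. complex_of_real ((c k)\<^sup>2)) \<and>
         (\<lambda>k. cnj (lam k) + \<i> * complex_of_real (\<omega> k)) \<in> O(\<lambda>k. complex_of_real ((c k)\<^sup>2))"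
proof -
  interpret oscillator_chain \<omega> c \<gamma>
    using om_pos om_inc c_sq gam by unfold_locales
  have near: "\<forall>\<^sub>F k in sequentially.
      cmod (lam k - \<i> * complex_of_real (\<omega> k)) \<le> 3 * \<gamma> / 4 * norm (complex_of_real ((c k)\<^sup>2))"
    using eventually_ge_at_top[of k1]
  proof eventually_elim
    case (elim k)
    then show ?case
      using dist_pole_le_near_lamstar[of k "lam k" "R k"] lam_zero R_re k1 by (simp add: norm_power)
  qed
  have "cmod (cnj (lam k) + \<i> * complex_of_real (\<omega> k)) = cmod (lam k - \<i> * complex_of_real (\<omega> k))"
    for k
    using complex_mod_cnj[of "lam k - \<i> * complex_of_real (\<omega> k)"] by simp
  then have near_cnj: "\<forall>\<^sub>F k in sequentially.
      cmod (cnj (lam k) + \<i> * complex_of_real (\<omega> k)) \<le> 3 * \<gamma> / 4 * norm (complex_of_real ((c k)\<^sup>2))"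
    using near by simp
  show ?thesis
    using bigoI[OF near] bigoI[OF near_cnj] by simp
qed

end
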